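(* Fix a cell with no source term ($S=0$) and total energy $E=1$, a positive integer $N_{obj}$, $w_{obj}=1/N_{obj}$, and a finite initial population $X_0$ of particles with positive weights summing to $1$. Apply repeatedly the cell-based population control step with conservative splitting described in the context, and let $X_l$ be the population after $l$ iterations and $X_\mathbb{T}$ the population of exactly $N_{obj}$ particles of weight $w_{obj}$. For $\epsilon>0$ let $$\mathcal T_\epsilon=\Big\{(w_1,\dots,w_{N_{obj}})\in\mathbb{R}^{N_{obj}}:\ \sum_{k=1}^{N_{obj}}w_k=N_{obj}w_{obj},\ \sum_{k=1}^{N_{obj}}|w_k-w_{obj}|\le\epsilon w_{obj}\Big\},$$ say $X_l\in\mathcal T_\epsilon$ if $X_l$ consists of exactly $N_{obj}$ particles whose weights form a tuple in $\mathcal T_\epsilon$, and let $\tau_\epsilon$ be the first $l$ with $X_l\in\mathcal T_\epsilon$. Then there exists a constant $c_3>0$ depending only on $N_{obj}$ such that, for every $\epsilon>0$, $$\mathbb{P}\big[\lim_{l\to\infty}X_l=X_\mathbb{T}\ \big|\ \tau_\epsilon<\infty\big]\ge 1-c_3\epsilon .$$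
   Context: Cell-based population control step for a single cell with existing particle weights $w_1,\dots,w_N$, $E=\sum_pw_p$, source $S\ge0$, target number $N_{obj}\ge1$ and $E+S>0$: set $w_{obj}=(E+S)/N_{obj}$; if $S>0$ emit $N^{vol}=\max(1,\lfloor S/w_{obj}\rfloor)$ particles of weight $S/N^{vol}$. If $E>0$, for each existing particle draw independently $u_p\sim\mathcal U(0,1)$, $I_p=\lfloor w_p/w_{obj}\rfloor$, $R_p=w_p/w_{obj}-I_p$; if $I_p=0$ (Russian Roulette) the particle is killed if $R_p<u_p$, otherwise its weight becomes $w_{obj}$; if $I_p\ge1$ (conservative Splitting) it is replaced by $N^{split}_p=I_p+\mathbf 1_{\{u_p<R_p\}}$ copies each of weight $w_p/N^{split}_p$. Then all weights are multiplied by a common factor so that the total is $E+S$. Non-void correction: if $S=0$ and no particle remains, the population becomes one particle of weight $E$. Populations are compared as elements of $\ell^1$ (weights in nonincreasing order padded with zeros); successive iterations use fresh independent uniform variables. *)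

theory Defs
  imports "HOL-Probability.Probability"
begin

definition pc_particle :: "real \<Rightarrow> real \<Rightarrow> real \<Rightarrow> real list" where
  "pc_particle wobj w u =
     (let x = w / wobj; I = nat \<lfloor>x\<rfloor>; R = x - real I in
      if I = 0 then (if R < u then [] else [wobj])
      else (let Ns = I + (if u < R then 1 else 0) in replicate Ns (w / real Ns)))"

definition pc_step :: "nat \<Rightarrow> real \<Rightarrow> real list \<Rightarrow> (nat \<Rightarrow> real) \<Rightarrow> real list" where
  "pc_step Nobj S ws u =
     (let E = sum_list ws;
          wobj = (E + S) / real Nobj;
          emitted = (if S > 0 then
                       (let Nv = max 1 (nat \<lfloor>S / wobj\<rfloor>) in replicate Nv (S / real Nv))
                     else []);
          survivors = (if E > 0 then concat (map (\<lambda>p. pc_particle wobj (ws ! p) (u p)) [0..<length ws])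
                       else []);
          pre = emitted @ survivors;
          normed = map (\<lambda>w. w * ((E + S) / sum_list pre)) pre
      in if S = 0 \<and> survivors = [] then [E] else normed)"

fun pc_iter :: "nat \<Rightarrow> real list \<Rightarrow> (nat \<times> nat \<Rightarrow> real) \<Rightarrow> nat \<Rightarrow> real list" where
  "pc_iter Nobj X0 u 0 = X0"
| "pc_iter Nobj X0 u (Suc l) = pc_step Nobj 0 (pc_iter Nobj X0 u l) (\<lambda>p. u (l, p))"

text \<open>Probability space: i.i.d. uniform(0,1) variables indexed by (iteration, particle).\<close>
definition pc_space :: "(nat \<times> nat \<Rightarrow> real) measure" where
  "pc_space = PiM UNIV (\<lambda>_. uniform_measure lborel {0<..<1})"

text \<open>Population as an element of l1: weights in nonincreasing order padded with zeros.\<close>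
definition pop_seq :: "real list \<Rightarrow> nat \<Rightarrow> real" where
  "pop_seq xs i = (if i < length xs then rev (sort xs) ! i else 0)"

definition l1_dist :: "real list \<Rightarrow> real list \<Rightarrow> real" where
  "l1_dist xs ys = (\<Sum>i < max (length xs) (length ys). \<bar>pop_seq xs i - pop_seq ys i\<bar>)"

definition in_T :: "nat \<Rightarrow> real \<Rightarrow> real list \<Rightarrow> bool" where
  "in_T Nobj eps ws =
     (let wobj = 1 / real Nobj in
      length ws = Nobj \<and> sum_list ws = real Nobj * wobj \<and>
      (\<Sum>w\<leftarrow>ws. \<bar>w - wobj\<bar>) \<le> eps * wobj)"

end

theory Submission
  imports Defs
begin

(* Once the population lies in T_eps it consists of N particles whose weights lie in
   (0, 2 w_obj).  If every uniform draw of a step behaves as expected (no light particle is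
   killed, no heavy particle is split), the step maps each weight w to max w w_obj and
   renormalises; this contracts the l1 deviation from the target by the factor 1 - 1/N, so the
   population stays in that regime and converges geometrically.  A draw for a particle of
   weight w misbehaves with probability at most |w - w_obj| / w_obj, and the draws of a step are
   independent of the past, so a step from a population of deviation D fails with probability at
   most N D.  At the first entrance into T_eps the deviation is at most eps w_obj, and after j
   further successful steps at most (1 - 1/N)^j eps w_obj, so all steps succeed except with
   probability at most sum_j (1 - 1/N)^j eps = N eps.  Hence c3 = N. *)

definition deviation :: "nat \<Rightarrow> real list \<Rightarrow> real" where
  "deviation N v = (\<Sum>w\<leftarrow>v. \<bar>w - 1 / real N\<bar>)"

definition ideal_step :: "nat \<Rightarrow> real list \<Rightarrow> real list" where
  "ideal_step N v =
     (let lifted = map (\<lambda>w. max w (1 / real N)) v in map (\<lambda>w. w / sum_list lifted) lifted)"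

(* For 0 < w < 2 c these are exactly the draws r for which pc_particle c w r is not [max w c]:
   a light particle is killed or a heavy one is split in two. *)
definition deviates :: "real \<Rightarrow> real \<Rightarrow> real \<Rightarrow> bool" where
  "deviates c w r \<longleftrightarrow> (if w < c then w / c < r else r < w / c - 1)"

lemma pc_particle_eq_max:
  assumes "0 < c" "0 < w" "w < 2 * c" "\<not> deviates c w r"
  shows "pc_particle c w r = [max w c]"
proof (cases "w < c")
  case True
  then have "nat \<lfloor>w / c\<rfloor> = 0" using assms by (simp add: divide_less_eq)
  then show ?thesis using assms True by (simp add: pc_particle_def Let_def deviates_def)
next
  case False
  then have "1 \<le> w / c" "w / c < 2" using assms by (auto simp: le_divide_eq divide_less_eq)
  then have "nat \<lfloor>w / c\<rfloor> = 1" by linarith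
  then show ?thesis using assms False by (simp add: pc_particle_def Let_def deviates_def)
qed

lemma pc_step_no_source:
  "pc_step N 0 v r =
     (let E = sum_list v;
          survivors =
            (if E > 0 then concat (map (\<lambda>p. pc_particle (E / real N) (v ! p) (r p)) [0..<length v])
             else [])
      in if survivors = [] then [E] else map (\<lambda>w. w * (E / sum_list survivors)) survivors)"
  by (simp add: pc_step_def Let_def)

lemma pc_step_eq_ideal_step:
  assumes "1 \<le> N" "length v = N" "sum_list v = 1"
    and "\<forall>w\<in>set v. 0 < w \<and> w < 2 / real N"
    and "\<forall>p<length v. \<not> deviates (1 / real N) (v ! p) (r p)"
  shows "pc_step N 0 v r = ideal_step N v"
proof -
  have "concat (map (\<lambda>p. pc_particle (1 / real N) (v ! p) (r p)) [0..<length v])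
      = concat (map (\<lambda>p. [max (v ! p) (1 / real N)]) [0..<length v])"
    using assms by (intro arg_cong[where f = concat] map_cong refl pc_particle_eq_max) auto
  also have "\<dots> = map (\<lambda>w. max w (1 / real N)) v"
    using map_map[of "\<lambda>w. max w (1 / real N)" "(!) v" "[0..<length v]"] by (simp add: map_nth o_def)
  finally show ?thesis
    using assms by (auto simp: pc_step_no_source ideal_step_def Let_def)
qed

lemma min_sum_list_le_sum_list_min:
  fixes xs :: "real list"
  assumes "\<forall>x\<in>set xs. 0 \<le> x" "0 \<le> m"
  shows "min (sum_list xs) m \<le> (\<Sum>x\<leftarrow>xs. min x m)"
  using assms
proof (induction xs)
  case (Cons a xs)
  moreover have "0 \<le> (\<Sum>x\<leftarrow>xs. min x m)" "0 \<le> sum_list xs"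
    using Cons.prems by (auto intro!: sum_list_nonneg)
  ultimately show ?case by (auto simp: min_def split: if_splits)
qed simp

(* |x - m| = (x - m) + 2 (m - min x m), and the minima sum to at least m. *)
lemma sum_list_abs_diff_mean_le:
  fixes xs :: "real list"
  assumes "\<forall>x\<in>set xs. 0 \<le> x" "0 \<le> m" "real (length xs) * m = sum_list xs" "xs \<noteq> []"
  shows "(\<Sum>x\<leftarrow>xs. \<bar>x - m\<bar>) \<le> 2 * (sum_list xs - m)"
proof -
  have "m \<le> real (length xs) * m"
    using assms(2,4) by (simp add: mult_le_cancel_right1 Suc_le_eq)
  then have "m \<le> (\<Sum>x\<leftarrow>xs. min x m)"
    using min_sum_list_le_sum_list_min[OF assms(1,2)] assms(3) by simp
  moreover have "\<bar>x - m\<bar> = (x - m) + 2 * (m - min x m)" for x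
    by (auto simp: min_def)
  then have "(\<Sum>x\<leftarrow>xs. \<bar>x - m\<bar>) = sum_list xs - real (length xs) * m
      + 2 * (real (length xs) * m - (\<Sum>x\<leftarrow>xs. min x m))"
    by (simp add: sum_list_addf sum_list_subtractf sum_list_const_mult sum_list_triv)
  ultimately show ?thesis
    using assms(3) by simp
qed

lemma sum_list_divide_distrib: "(\<Sum>x\<leftarrow>xs. f x / r) = (\<Sum>x\<leftarrow>xs. f x) / (r :: 'a :: field)"
  by (induction xs) (simp_all add: add_divide_distrib)

lemma length_ideal_step [simp]: "length (ideal_step N v) = length v"
  by (simp add: ideal_step_def Let_def)

(* With c = 1/N and the excesses e w = max (w - c) 0 of total P, the deviation of v is 2 P
   and ideal_step N v = map (\<lambda>w. (c + e w) / (1 + P)) v; the excesses have mean c P. *)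
lemma ideal_step_contracts:
  assumes N: "1 \<le> N" and len: "length v = N" and sum: "sum_list v = 1"
  shows "sum_list (ideal_step N v) = 1"
    and "deviation N (ideal_step N v) \<le> (1 - 1 / real N) * deviation N v"
proof -
  define c where "c = 1 / real N"
  define e where "e = (\<lambda>w. max (w - c) 0)"
  define P where "P = (\<Sum>w\<leftarrow>v. e w)"
  have c: "0 < c" "real N * c = 1" using N by (auto simp: c_def)
  have "v \<noteq> []" using N len by auto
  have P: "0 \<le> P" unfolding P_def e_def by (intro sum_list_nonneg) auto
  have lifted: "map (\<lambda>w. max w c) v = map (\<lambda>w. c + e w) v"
    by (auto simp: e_def max_def)
  have "sum_list (map (\<lambda>w. max w c) v) = 1 + P"
    unfolding lifted using c len by (simp add: sum_list_addf sum_list_triv P_def)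
  then have ideal: "ideal_step N v = map (\<lambda>w. (c + e w) / (1 + P)) v"
    by (simp add: ideal_step_def Let_def c_def[symmetric] lifted)
  show "sum_list (ideal_step N v) = 1"
    using c len P by (simp add: ideal sum_list_divide_distrib sum_list_addf sum_list_triv P_def)
  have dev_v: "deviation N v = 2 * P"
  proof -
    have "\<bar>w - c\<bar> = 2 * e w - (w - c)" for w by (auto simp: e_def max_def)
    then have "deviation N v = 2 * P - (sum_list v - real N * c)"
      by (simp add: deviation_def c_def[symmetric] sum_list_subtractf sum_list_const_mult
          sum_list_triv len P_def)
    with sum c show ?thesis by simp
  qed
  have "\<bar>(c + e w) / (1 + P) - c\<bar> = \<bar>e w - c * P\<bar> / (1 + P)" for w
    using P by (simp add: field_simps)
  then have "deviation N (ideal_step N v) = (\<Sum>w\<leftarrow>v. \<bar>e w - c * P\<bar>) / (1 + P)"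
    by (simp add: deviation_def ideal c_def[symmetric] o_def sum_list_divide_distrib)
  also have "\<dots> \<le> (\<Sum>w\<leftarrow>v. \<bar>e w - c * P\<bar>)"
  proof -
    have "0 \<le> (\<Sum>w\<leftarrow>v. \<bar>e w - c * P\<bar>)" by (intro sum_list_nonneg) auto
    with P show ?thesis by (simp add: divide_le_eq mult_le_cancel_left1)
  qed
  also have "\<dots> \<le> 2 * (P - c * P)"
    using sum_list_abs_diff_mean_le[of "map e v" "c * P"] c P len \<open>v \<noteq> []\<close>
    by (simp add: e_def P_def o_def)
  also have "\<dots> = (1 - 1 / real N) * deviation N v"
    by (simp add: dev_v c_def algebra_simps)
  finally show "deviation N (ideal_step N v) \<le> (1 - 1 / real N) * deviation N v" .
qed

lemma funpow_ideal_step_contracts: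
  assumes "1 \<le> N" "length v = N" "sum_list v = 1"
  shows "length ((ideal_step N ^^ j) v) = N \<and> sum_list ((ideal_step N ^^ j) v) = 1
    \<and> deviation N ((ideal_step N ^^ j) v) \<le> (1 - 1 / real N) ^ j * deviation N v"
proof (induction j)
  case (Suc j)
  let ?v = "(ideal_step N ^^ j) v"
  have "deviation N (ideal_step N ?v) \<le> (1 - 1 / real N) * deviation N ?v"
    using ideal_step_contracts(2)[OF assms(1)] Suc by simp
  also have "\<dots> \<le> (1 - 1 / real N) * ((1 - 1 / real N) ^ j * deviation N v)"
    using Suc assms(1) by (intro mult_left_mono) auto
  finally show ?case
    using ideal_step_contracts(1)[OF assms(1)] Suc by simp
qed (use assms in simp)

lemma bounds_of_deviation_lt:
  assumes "deviation N v < 1 / real N" "w \<in> set v"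
  shows "0 < w \<and> w < 2 / real N"
proof -
  have "\<bar>w - 1 / real N\<bar> \<le> deviation N v"
    unfolding deviation_def using assms(2) by (intro member_le_sum_list) auto
  with assms(1) show ?thesis by auto
qed

lemma l1_dist_uniform_eq_deviation:
  assumes "length v = N"
  shows "l1_dist v (replicate N (1 / real N)) = deviation N v"
proof -
  have "pop_seq (replicate N (1 / real N)) i = 1 / real N" if "i < N" for i
    using that nth_mem[of i "rev (sort (replicate N (1 / real N)))"] by (auto simp: pop_seq_def)
  then have "l1_dist v (replicate N (1 / real N)) = (\<Sum>i<N. \<bar>rev (sort v) ! i - 1 / real N\<bar>)"
    unfolding l1_dist_def using assms by (intro sum.cong) (auto simp: pop_seq_def)
  also have "\<dots> = (\<Sum>w\<leftarrow>rev (sort v). \<bar>w - 1 / real N\<bar>)"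
    using assms by (simp add: sum_list_sum_nth atLeast0LessThan)
  also have "\<dots> = deviation N v"
    unfolding deviation_def by (simp add: rev_map[symmetric] sum_mset_sum_list[symmetric])
  finally show ?thesis .
qed

abbreviation unif01 :: "real measure" where
  "unif01 \<equiv> uniform_measure lborel {0<..<1}"

lemma prob_space_unif01: "prob_space unif01"
  by (rule prob_space_uniform_measure) auto

lemma product_prob_space_unif01: "product_prob_space (\<lambda>_::nat \<times> nat. unif01)"
  unfolding product_prob_space_def product_prob_space_axioms_def product_sigma_finite_def
  using prob_space_unif01 prob_space_imp_sigma_finite by blast

lemma prob_space_pc_space: "prob_space pc_space"
  unfolding pc_space_def by (rule prob_space_PiM) (rule prob_space_unif01)

interpretation pc: prob_space pc_space
  by (rule prob_space_pc_space)

lemma space_pc_space [simp]: "space pc_space = UNIV"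
  unfolding pc_space_def by (simp add: space_PiM)

lemma measurable_PiM_coordinate:
  "i \<in> K \<Longrightarrow> (\<lambda>x. x i) \<in> borel_measurable (PiM K (\<lambda>_. unif01))"
  using measurable_component_singleton[of i K "\<lambda>_. unif01"]
    measurable_cong_sets[of "PiM K (\<lambda>_. unif01)" "PiM K (\<lambda>_. unif01)" unif01 borel] by simp

lemma measurable_pc_space_coordinate: "(\<lambda>x. x i) \<in> borel_measurable pc_space"
  unfolding pc_space_def by (rule measurable_PiM_coordinate) simp

lemma measure_pc_space_coordinate:
  "A \<in> sets borel \<Longrightarrow> measure pc_space {u. u i \<in> A} = measure unif01 A"
  using product_prob_space.emeasure_PiM_Collect_single[OF product_prob_space_unif01, of i UNIV A]
  unfolding pc_space_def measure_def by (simp add: space_PiM)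

lemma indep_vars_pc_space_coordinates:
  "pc.indep_vars (\<lambda>_. unif01) (\<lambda>i x. x i) UNIV"
proof -
  interpret P: product_prob_space "\<lambda>_::nat \<times> nat. unif01" UNIV
    by (rule product_prob_space_unif01)
  have "distr pc_space (\<Pi>\<^sub>M i\<in>UNIV. unif01) (\<lambda>x. \<lambda>i\<in>UNIV. x i)
      = (\<Pi>\<^sub>M i\<in>UNIV. distr pc_space unif01 (\<lambda>x. x i))"
    unfolding pc_space_def using P.PiM_component[of i for i]
    by (simp add: restrict_UNIV distr_id2)
  moreover have "pc.random_variable unif01 (\<lambda>x. x i)" for i
    unfolding pc_space_def by (rule measurable_component_singleton) simp
  ultimately show ?thesis
    by (subst pc.indep_vars_iff_distr_eq_PiM) auto
qed

lemma measure_pc_space_restrict_indep: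
  assumes "K \<inter> L = {}" "A \<in> sets (PiM K (\<lambda>_. unif01))" "B \<in> sets (PiM L (\<lambda>_. unif01))"
  shows "measure pc_space {u. restrict u K \<in> A \<and> restrict u L \<in> B} =
         measure pc_space {u. restrict u K \<in> A} * measure pc_space {u. restrict u L \<in> B}"
proof -
  have "pc.indep_var (PiM K (\<lambda>_. unif01)) (\<lambda>u. restrict (\<lambda>i. u i) K)
                     (PiM L (\<lambda>_. unif01)) (\<lambda>u. restrict (\<lambda>i. u i) L)"
    by (rule pc.indep_var_restrict[OF indep_vars_pc_space_coordinates]) (use assms in auto)
  from pc.indep_varD[OF this assms(2,3)] show ?thesis
    by (simp add: vimage_def)
qed

lemma simple_function_bind:
  assumes f: "simple_function M f" and H: "\<And>a. simple_function M (H a)"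
  shows "simple_function M (\<lambda>x. H (f x) x)"
proof -
  let ?F = "f ` space M"
  have fin: "finite ?F" using simple_functionD(1)[OF f] .
  have "(\<lambda>x. H (f x) x) ` space M \<subseteq> (\<Union>a\<in>?F. H a ` space M)" by auto
  then have "finite ((\<lambda>x. H (f x) x) ` space M)"
    using fin H by (meson finite_UN_I finite_subset simple_functionD(1))
  moreover have "(\<lambda>x. H (f x) x) -` {y} \<inter> space M \<in> sets M" for y
  proof -
    have "(\<lambda>x. H (f x) x) -` {y} \<inter> space M
        = (\<Union>a\<in>?F. (f -` {a} \<inter> space M) \<inter> (H a -` {y} \<inter> space M))"
      by auto
    also have "\<dots> \<in> sets M"
      by (intro sets.finite_UN sets.Int simple_functionD(2) fin f H)
    finally show ?thesis .
  qed
  ultimately show ?thesis unfolding simple_function_def by blast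
qed

lemma simple_function_bool:
  fixes P :: "'a \<Rightarrow> bool"
  assumes "{x\<in>space M. P x} \<in> sets M"
  shows "simple_function M P"
proof -
  have "simple_function M (\<lambda>x. if P x then True else False)"
    by (rule simple_function_If) (use assms in auto)
  moreover have "(\<lambda>x. if P x then True else False) = P" by auto
  ultimately show ?thesis by simp
qed

lemma sets_Collect_simple_function:
  "simple_function M f \<Longrightarrow> {x\<in>space M. P (f x)} \<in> sets M"
  using simple_functionD(2)[of M f "Collect P"] by (simp add: vimage_def Int_def conj_commute)

lemma simple_function_map:
  "(\<And>k. k \<in> set ks \<Longrightarrow> simple_function M (f k)) \<Longrightarrow> simple_function M (\<lambda>x. map (\<lambda>k. f k x) ks)"
  by (induction ks) (auto intro: simple_function_compose2[where h = Cons])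

lemma simple_function_pc_particle:
  assumes g: "g \<in> borel_measurable M"
  shows "simple_function M (\<lambda>x. pc_particle c w (g x))"
proof -
  define I where "I = nat \<lfloor>w / c\<rfloor>"
  define R where "R = w / c - real I"
  have "pc_particle c w r =
      (if I = 0 then (if R < r then [] else [c])
       else if r < R then replicate (I + 1) (w / real (I + 1)) else replicate I (w / real I))" for r
    by (simp add: pc_particle_def Let_def I_def R_def)
  moreover have "{x\<in>space M. R < g x} \<in> sets M" "{x\<in>space M. g x < R} \<in> sets M"
    using g borel_measurable_iff_greater borel_measurable_iff_less by blast+
  ultimately show ?thesis
    by (simp only:) (intro simple_function_If simple_function_const sets.sets_Collect_const)
qed

lemma simple_function_pc_step:
  assumes "\<And>p. (\<lambda>x. r x p) \<in> borel_measurable M"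
  shows "simple_function M (\<lambda>x. pc_step N 0 v (r x))"
proof -
  have "simple_function M (\<lambda>x.
      if sum_list v > 0
      then concat (map (\<lambda>p. pc_particle (sum_list v / real N) (v ! p) (r x p)) [0..<length v])
      else [])"
    by (cases "sum_list v > 0")
       (auto intro!: simple_function_compose1[where g = concat] simple_function_map
                     simple_function_pc_particle assms)
  then show ?thesis
    unfolding pc_step_no_source Let_def by (rule simple_function_compose1)
qed

lemma simple_function_pc_iter:
  assumes "\<And>k p. k < l \<Longrightarrow> (\<lambda>u. u (k, p)) \<in> borel_measurable M"
  shows "simple_function M (\<lambda>u. pc_iter N X0 u l)"
  using assms
proof (induction l)
  case 0
  then show ?case by simp
next
  case (Suc l)
  then show ?case
    by (simp only: pc_iter.simps)
       (rule simple_function_bind[where H = "\<lambda>v u. pc_step N 0 v (\<lambda>p. u (l, p))"],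
        auto intro!: simple_function_pc_step)
qed

lemma pc_iter_cong:
  "(\<And>k p. k < l \<Longrightarrow> u (k, p) = u' (k, p)) \<Longrightarrow> pc_iter N X0 u l = pc_iter N X0 u' l"
  by (induction l) (auto intro!: arg_cong[where f = "pc_step N 0 _"])

definition pc_path :: "nat \<Rightarrow> real list \<Rightarrow> (nat \<times> nat \<Rightarrow> real) \<Rightarrow> nat \<Rightarrow> real list list" where
  "pc_path N X0 u l = map (pc_iter N X0 u) [0..<Suc l]"

lemma nth_pc_path: "k \<le> l \<Longrightarrow> pc_path N X0 u l ! k = pc_iter N X0 u k"
  by (simp add: pc_path_def del: upt_Suc)

lemma last_pc_path: "last (pc_path N X0 u l) = pc_iter N X0 u l"
  by (simp add: pc_path_def)

lemma pc_path_cong: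
  "(\<And>k p. k < l \<Longrightarrow> u (k, p) = u' (k, p)) \<Longrightarrow> pc_path N X0 u l = pc_path N X0 u' l"
  unfolding pc_path_def by (intro map_cong refl pc_iter_cong) auto

lemma simple_function_pc_path:
  assumes "\<And>k p. k < l \<Longrightarrow> (\<lambda>u. u (k, p)) \<in> borel_measurable M"
  shows "simple_function M (\<lambda>u. pc_path N X0 u l)"
  unfolding pc_path_def using assms
  by (intro simple_function_map simple_function_pc_iter) auto

lemma sets_borel_deviates: "{r. deviates c w r} \<in> sets borel"
  by (cases "w < c") (simp_all add: deviates_def)

lemma measure_unif01_deviates_le:
  assumes "0 < c"
  shows "measure unif01 {r. deviates c w r} \<le> \<bar>w - c\<bar> / c"
proof -
  define a where "a = (if w < c then w / c else 0)"
  have "{0<..<1} \<inter> {r. deviates c w r} \<subseteq> {a .. a + \<bar>w - c\<bar> / c}"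
    using assms by (auto simp: deviates_def a_def abs_if diff_divide_distrib)
  then have "measure lborel ({0<..<1} \<inter> {r. deviates c w r}) \<le> measure lborel {a .. a + \<bar>w - c\<bar> / c}"
    using sets_borel_deviates[of c w]
    by (intro measure_mono_fmeasurable) (auto simp: fmeasurable_def emeasure_lborel_Icc_eq)
  then show ?thesis
    using assms sets_borel_deviates[of c w] by simp
qed

definition row_deviates :: "nat \<Rightarrow> nat \<Rightarrow> real list \<Rightarrow> (nat \<times> nat \<Rightarrow> real) \<Rightarrow> bool" where
  "row_deviates N l v u \<longleftrightarrow> (\<exists>p<length v. deviates (1 / real N) (v ! p) (u (l, p)))"

lemma sets_row_deviates:
  assumes "\<And>p. (\<lambda>u. u (l, p)) \<in> borel_measurable M"
  shows "{u\<in>space M. row_deviates N l v u} \<in> sets M"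
proof -
  have "{u\<in>space M. row_deviates N l v u}
      = (\<Union>p<length v. (\<lambda>u. u (l, p)) -` {r. deviates (1 / real N) (v ! p) r} \<inter> space M)"
    by (auto simp: row_deviates_def)
  also have "\<dots> \<in> sets M"
    using assms sets_borel_deviates by (intro sets.finite_UN measurable_sets) auto
  finally show ?thesis .
qed

lemma measure_row_deviates_le:
  assumes "1 \<le> N"
  shows "measure pc_space {u. row_deviates N l v u} \<le> real N * deviation N v"
proof -
  let ?D = "\<lambda>p. {u. u (l, p) \<in> {r. deviates (1 / real N) (v ! p) r}}"
  have "measure pc_space {u. row_deviates N l v u} = measure pc_space (\<Union>p<length v. ?D p)"
    by (auto simp: row_deviates_def intro!: arg_cong[where f = "measure pc_space"])
  also have "\<dots> \<le> (\<Sum>p<length v. measure pc_space (?D p))"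
  proof (rule measure_UNION_le)
    show "?D p \<in> pc.events" for p
      using measurable_sets[OF measurable_pc_space_coordinate sets_borel_deviates, of "(l, p)"]
      by (simp add: vimage_def)
  qed simp
  also have "\<dots> = (\<Sum>p<length v. measure unif01 {r. deviates (1 / real N) (v ! p) r})"
    by (simp only: measure_pc_space_coordinate[OF sets_borel_deviates])
  also have "\<dots> \<le> (\<Sum>p<length v. \<bar>v ! p - 1 / real N\<bar> / (1 / real N))"
    using assms by (intro sum_mono measure_unif01_deviates_le) simp
  also have "\<dots> = real N * deviation N v"
    by (simp add: deviation_def sum_list_sum_nth atLeast0LessThan sum_distrib_left mult.commute)
  finally show ?thesis .
qed

lemma sets_pc_path_event: "{u. P (pc_path N X0 u l)} \<in> sets pc_space"
  using sets_Collect_simple_function[OF simple_function_pc_path[OF measurable_pc_space_coordinate]]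
  by simp

lemma sets_pc_path_event_row_deviates:
  "{u. P (pc_path N X0 u l) \<and> row_deviates N l (pc_iter N X0 u l) u} \<in> sets pc_space"
proof -
  have "simple_function pc_space (\<lambda>u. row_deviates N l (pc_iter N X0 u l) u)"
    by (rule simple_function_bind[where H = "row_deviates N l"])
       (auto intro!: simple_function_pc_iter simple_function_bool sets_row_deviates
                     measurable_pc_space_coordinate)
  then have "simple_function pc_space (\<lambda>u. (pc_path N X0 u l, row_deviates N l (pc_iter N X0 u l) u))"
    by (intro simple_function_Pair simple_function_pc_path measurable_pc_space_coordinate)
  from sets_Collect_simple_function[OF this, of "\<lambda>(h, b). P h \<and> b"] show ?thesis
    by simp
qed

lemma measure_pc_path_row_deviates_mult:
  "measure pc_space {u. pc_path N X0 u l = h \<and> row_deviates N' l v u} =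
   measure pc_space {u. pc_path N X0 u l = h} * measure pc_space {u. row_deviates N' l v u}"
proof -
  define K where "K = {kp :: nat \<times> nat. fst kp < l}"
  define L where "L = {kp :: nat \<times> nat. fst kp = l}"
  define A where "A = {u\<in>space (PiM K (\<lambda>_. unif01)). pc_path N X0 u l = h}"
  define B where "B = {u\<in>space (PiM L (\<lambda>_. unif01)). row_deviates N' l v u}"
  have "A \<in> sets (PiM K (\<lambda>_. unif01))"
    unfolding A_def
    by (intro sets_Collect_simple_function simple_function_pc_path measurable_PiM_coordinate)
       (simp add: K_def)
  moreover have "B \<in> sets (PiM L (\<lambda>_. unif01))"
    unfolding B_def by (intro sets_row_deviates measurable_PiM_coordinate) (simp add: L_def)
  moreover have "K \<inter> L = {}" by (auto simp: K_def L_def)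
  moreover have "restrict u K \<in> A \<longleftrightarrow> pc_path N X0 u l = h" for u
    using pc_path_cong[of l "restrict u K" u N X0] by (auto simp: A_def K_def space_PiM)
  moreover have "restrict u L \<in> B \<longleftrightarrow> row_deviates N' l v u" for u
    by (auto simp: B_def L_def space_PiM row_deviates_def)
  ultimately show ?thesis
    using measure_pc_space_restrict_indep[of K L A B] by simp
qed

lemma measure_pc_path_event_row_deviates_le:
  assumes N: "1 \<le> N"
    and deviation: "\<And>u. P (pc_path N X0 u l) \<Longrightarrow> deviation N (pc_iter N X0 u l) \<le> \<delta>"
  shows "measure pc_space {u. P (pc_path N X0 u l) \<and> row_deviates N l (pc_iter N X0 u l) u}
         \<le> real N * \<delta> * measure pc_space {u. P (pc_path N X0 u l)}"
proof -
  let ?path = "\<lambda>u. pc_path N X0 u l"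
  define F where "F = {h \<in> range ?path. P h}"
  have "finite (range ?path)"
    using simple_functionD(1)[OF simple_function_pc_path[OF measurable_pc_space_coordinate]] by simp
  then have F: "finite F" by (simp add: F_def)
  have path_events: "{u. ?path u = h} \<in> pc.events" for h
    using sets_pc_path_event[of "\<lambda>h'. h' = h"] by simp
  have row_events: "{u. row_deviates N l v u} \<in> pc.events" for v
    using sets_row_deviates[OF measurable_pc_space_coordinate] by simp
  have "{u. P (?path u) \<and> row_deviates N l (pc_iter N X0 u l) u}
      = (\<Union>h\<in>F. {u. ?path u = h} \<inter> {u. row_deviates N l (last h) u})"
    by (auto simp: F_def last_pc_path) (metis last_pc_path)
  then have "measure pc_space {u. P (?path u) \<and> row_deviates N l (pc_iter N X0 u l) u}
      \<le> (\<Sum>h\<in>F. measure pc_space ({u. ?path u = h} \<inter> {u. row_deviates N l (last h) u}))"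
    using F path_events row_events by (simp add: measure_UNION_le)
  also have "\<dots> = (\<Sum>h\<in>F. measure pc_space {u. ?path u = h}
                        * measure pc_space {u. row_deviates N l (last h) u})"
    by (simp add: Int_def measure_pc_path_row_deviates_mult)
  also have "\<dots> \<le> (\<Sum>h\<in>F. measure pc_space {u. ?path u = h} * (real N * \<delta>))"
  proof (intro sum_mono mult_left_mono)
    fix h assume "h \<in> F"
    then obtain u where "h = ?path u" "P (?path u)" by (auto simp: F_def)
    then have "real N * deviation N (last h) \<le> real N * \<delta>"
      using deviation by (simp add: last_pc_path mult_left_mono)
    then show "measure pc_space {u. row_deviates N l (last h) u} \<le> real N * \<delta>"
      using measure_row_deviates_le[OF N, of l "last h"] by linarith
  qed simp
  also have "\<dots> = real N * \<delta> * measure pc_space (\<Union>h\<in>F. {u. ?path u = h})"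
    using F path_events
    by (subst pc.finite_measure_finite_Union)
       (auto simp: disjoint_family_on_def sum_distrib_left mult.commute)
  also have "(\<Union>h\<in>F. {u. ?path u = h}) = {u. P (?path u)}"
    by (auto simp: F_def)
  finally show ?thesis .
qed

lemma sets_pc_converges:
  "{u. (\<lambda>l. l1_dist (pc_iter N X0 u l) r) \<longlonglongrightarrow> 0} \<in> sets pc_space"
proof -
  have "(\<lambda>u. l1_dist (pc_iter N X0 u l) r) \<in> borel_measurable pc_space" for l
    by (intro borel_measurable_simple_function simple_function_compose1[where g = "\<lambda>v. l1_dist v r"]
        simple_function_pc_iter measurable_pc_space_coordinate)
  then have "Measurable.pred pc_space (\<lambda>u. (\<lambda>l. l1_dist (pc_iter N X0 u l) r) \<longlonglongrightarrow> 0)"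
    by (rule measurable_limit)
  then show ?thesis by (simp add: pred_def)
qed

lemma (in prob_space) prob_UNION_le_sums:
  assumes "\<And>j. A j \<in> events" "\<And>j. prob (A j) \<le> a j" "a sums t"
  shows "prob (\<Union>j. A j) \<le> t"
proof -
  have summable: "summable (\<lambda>j. prob (A j))"
    by (rule summable_comparison_test'[OF sums_summable[OF assms(3)], of 0]) (use assms in simp)
  have "prob (\<Union>j. A j) \<le> (\<Sum>j. prob (A j))"
    by (rule finite_measure_subadditive_countably) (use assms summable in auto)
  also have "\<dots> \<le> (\<Sum>j. a j)"
    by (rule suminf_le) (use assms summable sums_summable[OF assms(3)] in auto)
  finally show ?thesis using sums_unique[OF assms(3)] by simp
qed

lemma (in prob_space) prob_Int_ge_of_exceptions:
  fixes H :: "nat \<Rightarrow> 'a set" and B :: "nat \<Rightarrow> nat \<Rightarrow> 'a set"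
  assumes H: "disjoint_family H" "\<And>m. H m \<in> events"
    and B: "\<And>m j. B m j \<in> events" "\<And>m j. prob (B m j) \<le> b j * prob (H m)" "b sums s"
    and C: "C \<in> events" "(\<Union>m. H m) - C \<subseteq> (\<Union>m j. B m j)"
  shows "(1 - s) * prob (\<Union>m. H m) \<le> prob ((\<Union>m. H m) \<inter> C)"
proof -
  have H_sums: "(\<lambda>m. prob (H m)) sums prob (\<Union>m. H m)"
    by (rule finite_measure_UNION) (use H in auto)
  have B_union: "prob (\<Union>j. B m j) \<le> s * prob (H m)" for m
    by (rule prob_UNION_le_sums[where a = "\<lambda>j. b j * prob (H m)"])
       (use B sums_mult2[OF B(3)] in auto)
  have "prob (\<Union>m. \<Union>j. B m j) \<le> s * prob (\<Union>m. H m)"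
    by (rule prob_UNION_le_sums[where a = "\<lambda>m. s * prob (H m)"])
       (use B B_union sums_mult[OF H_sums] in auto)
  moreover have "prob ((\<Union>m. H m) - C) \<le> prob (\<Union>m. \<Union>j. B m j)"
    using B C by (intro finite_measure_mono) auto
  moreover have "prob ((\<Union>m. H m) - C) = prob (\<Union>m. H m) - prob ((\<Union>m. H m) \<inter> C)"
    using H C by (intro finite_measure_Diff') auto
  ultimately show ?thesis by (simp add: algebra_simps)
qed

context
  fixes N :: nat and X0 :: "real list" and eps :: real
  assumes N: "1 \<le> N" and eps: "0 < eps" "eps < 1"
begin

(* Phrased on pc_path so that ideal_run m j is visibly determined by the draws of the rows
   before m + j, hence independent of row m + j. *)
definition ideal_path :: "nat \<Rightarrow> nat \<Rightarrow> real list list \<Rightarrow> bool" where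
  "ideal_path m j h \<longleftrightarrow> in_T N eps (h ! m) \<and> (\<forall>k<m. \<not> in_T N eps (h ! k))
     \<and> (\<forall>i<j. h ! Suc (m + i) = ideal_step N (h ! (m + i)))"

definition ideal_run :: "nat \<Rightarrow> nat \<Rightarrow> (nat \<times> nat \<Rightarrow> real) \<Rightarrow> bool" where
  "ideal_run m j u \<longleftrightarrow> ideal_path m j (pc_path N X0 u (m + j))"

abbreviation converges_to_target :: "(nat \<times> nat \<Rightarrow> real) \<Rightarrow> bool" where
  "converges_to_target u \<equiv> (\<lambda>l. l1_dist (pc_iter N X0 u l) (replicate N (1 / real N))) \<longlonglongrightarrow> 0"

lemma ideal_run_iff:
  "ideal_run m j u \<longleftrightarrow> in_T N eps (pc_iter N X0 u m) \<and> (\<forall>k<m. \<not> in_T N eps (pc_iter N X0 u k))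
     \<and> (\<forall>i<j. pc_iter N X0 u (Suc (m + i)) = ideal_step N (pc_iter N X0 u (m + i)))"
  by (simp add: ideal_run_def ideal_path_def nth_pc_path)

lemma ideal_run_mono: "ideal_run m j u \<Longrightarrow> j' \<le> j \<Longrightarrow> ideal_run m j' u"
  by (auto simp: ideal_run_iff)

lemma ideal_run_pc_iter:
  "ideal_run m j u \<Longrightarrow> pc_iter N X0 u (m + j) = (ideal_step N ^^ j) (pc_iter N X0 u m)"
proof (induction j)
  case (Suc j)
  have "pc_iter N X0 u (Suc (m + j)) = ideal_step N (pc_iter N X0 u (m + j))"
    using Suc.prems unfolding ideal_run_iff by blast
  then show ?case
    using Suc.IH ideal_run_mono[OF Suc.prems, of j] by simp
qed simp

lemma ideal_run_deviation_le:
  assumes "ideal_run m j u"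
  shows "length (pc_iter N X0 u (m + j)) = N \<and> sum_list (pc_iter N X0 u (m + j)) = 1
    \<and> deviation N (pc_iter N X0 u (m + j)) \<le> (1 - 1 / real N) ^ j * (eps / real N)"
proof -
  let ?v = "pc_iter N X0 u m"
  have "in_T N eps ?v" using assms by (simp add: ideal_run_iff)
  then have v: "length ?v = N" "sum_list ?v = 1" "deviation N ?v \<le> eps / real N"
    using N by (simp_all add: in_T_def Let_def deviation_def)
  have "(1 - 1 / real N) ^ j * deviation N ?v \<le> (1 - 1 / real N) ^ j * (eps / real N)"
    using v(3) N by (intro mult_left_mono) auto
  then show ?thesis
    using funpow_ideal_step_contracts[OF N v(1,2), of j] ideal_run_pc_iter[OF assms] by simp
qed

lemma ideal_run_Suc:
  assumes run: "ideal_run m j u" and "\<not> row_deviates N (m + j) (pc_iter N X0 u (m + j)) u"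
  shows "ideal_run m (Suc j) u"
proof -
  let ?v = "pc_iter N X0 u (m + j)"
  have v: "length ?v = N" "sum_list ?v = 1"
    and deviation: "deviation N ?v \<le> (1 - 1 / real N) ^ j * (eps / real N)"
    using ideal_run_deviation_le[OF run] by auto
  have "(1 - 1 / real N) ^ j * (eps / real N) \<le> eps / real N"
    using N eps by (intro mult_left_le_one_le power_le_one) auto
  also have "\<dots> < 1 / real N"
    using N eps by (simp add: divide_strict_right_mono)
  finally have "\<forall>w\<in>set ?v. 0 < w \<and> w < 2 / real N"
    using deviation bounds_of_deviation_lt[of N ?v] by auto
  then have "pc_iter N X0 u (Suc (m + j)) = ideal_step N ?v"
    using pc_step_eq_ideal_step[OF N v] assms(2) by (simp add: row_deviates_def)
  with run show ?thesis
    by (auto simp: ideal_run_iff less_Suc_eq)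
qed

lemma converges_if_ideal_run_forever:
  assumes "\<And>j. ideal_run m j u"
  shows "converges_to_target u"
proof -
  have "(\<lambda>j. l1_dist (pc_iter N X0 u (j + m)) (replicate N (1 / real N))) \<longlonglongrightarrow> 0"
  proof (rule Lim_null_comparison)
    have "norm (l1_dist (pc_iter N X0 u (j + m)) (replicate N (1 / real N)))
        \<le> (1 - 1 / real N) ^ j * (eps / real N)" for j
    proof -
      have "0 \<le> deviation N (pc_iter N X0 u (m + j))"
        unfolding deviation_def by (intro sum_list_nonneg) auto
      then show ?thesis
        using ideal_run_deviation_le[OF assms, of j]
          l1_dist_uniform_eq_deviation[of "pc_iter N X0 u (m + j)" N]
        by (simp add: add.commute)
    qed
    then show "\<forall>\<^sub>F j in sequentially. norm (l1_dist (pc_iter N X0 u (j + m)) (replicate N (1 / real N)))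
        \<le> (1 - 1 / real N) ^ j * (eps / real N)"
      by simp
    show "(\<lambda>j. (1 - 1 / real N) ^ j * (eps / real N)) \<longlonglongrightarrow> 0"
      using N by (intro tendsto_mult_left_zero LIMSEQ_power_zero) simp
  qed
  then show ?thesis by (rule LIMSEQ_offset)
qed

lemma row_deviates_if_not_converges:
  assumes "ideal_run m 0 u" "\<not> converges_to_target u"
  obtains j where "ideal_run m j u" "row_deviates N (m + j) (pc_iter N X0 u (m + j)) u"
proof -
  have "\<exists>j. ideal_run m j u \<and> \<not> ideal_run m (Suc j) u"
  proof (rule ccontr)
    assume "\<not> ?thesis"
    then have "ideal_run m j u" for j
      using assms(1) by (induction j) auto
    then show False
      using converges_if_ideal_run_forever assms(2) by blast
  qed
  then show ?thesis
    using ideal_run_Suc that by blast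
qed

lemma sets_ideal_run: "{u. ideal_run m j u} \<in> pc.events"
  unfolding ideal_run_def by (rule sets_pc_path_event)

lemma sets_ideal_run_row_deviates:
  "{u. ideal_run m j u \<and> row_deviates N (m + j) (pc_iter N X0 u (m + j)) u} \<in> pc.events"
  unfolding ideal_run_def by (rule sets_pc_path_event_row_deviates)

lemma measure_ideal_run_row_deviates_le:
  "measure pc_space {u. ideal_run m j u \<and> row_deviates N (m + j) (pc_iter N X0 u (m + j)) u}
   \<le> (1 - 1 / real N) ^ j * eps * measure pc_space {u. ideal_run m 0 u}"
proof -
  have "measure pc_space {u. ideal_run m j u \<and> row_deviates N (m + j) (pc_iter N X0 u (m + j)) u}
      \<le> real N * ((1 - 1 / real N) ^ j * (eps / real N)) * measure pc_space {u. ideal_run m j u}"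
    unfolding ideal_run_def
    by (rule measure_pc_path_event_row_deviates_le[OF N])
       (use ideal_run_deviation_le in \<open>auto simp: ideal_run_def\<close>)
  also have "\<dots> \<le> real N * ((1 - 1 / real N) ^ j * (eps / real N))
                  * measure pc_space {u. ideal_run m 0 u}"
    using N eps sets_ideal_run
    by (intro mult_left_mono pc.finite_measure_mono) (auto intro: ideal_run_mono)
  also have "real N * ((1 - 1 / real N) ^ j * (eps / real N)) = (1 - 1 / real N) ^ j * eps"
    using N by simp
  finally show ?thesis .
qed

lemma measure_converges_ge:
  "(1 - real N * eps) * measure pc_space {u. \<exists>l. in_T N eps (pc_iter N X0 u l)}
   \<le> measure pc_space {u. converges_to_target u \<and> (\<exists>l. in_T N eps (pc_iter N X0 u l))}"
proof -
  let ?H = "\<lambda>m. {u. ideal_run m 0 u}"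
  let ?B = "\<lambda>m j. {u. ideal_run m j u \<and> row_deviates N (m + j) (pc_iter N X0 u (m + j)) u}"
  have hit: "{u. \<exists>l. in_T N eps (pc_iter N X0 u l)} = (\<Union>m. ?H m)"
  proof (intro set_eqI iffI)
    fix u assume "u \<in> {u. \<exists>l. in_T N eps (pc_iter N X0 u l)}"
    then obtain m where "in_T N eps (pc_iter N X0 u m)" "\<forall>k<m. \<not> in_T N eps (pc_iter N X0 u k)"
      using exists_least_iff[of "\<lambda>l. in_T N eps (pc_iter N X0 u l)"] by auto
    then show "u \<in> (\<Union>m. ?H m)" by (auto simp: ideal_run_iff)
  qed (auto simp: ideal_run_iff)
  have "m = m'" if "ideal_run m 0 u" "ideal_run m' 0 u" for m m' u
    using that by (meson ideal_run_iff linorder_neqE_nat)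
  then have disjoint: "disjoint_family ?H"
    by (auto simp: disjoint_family_on_def)
  have sums: "(\<lambda>j. (1 - 1 / real N) ^ j * eps) sums (real N * eps)"
  proof -
    have "norm (1 - 1 / real N) < 1" using N by simp
    from sums_mult2[OF geometric_sums[OF this], of eps] show ?thesis by simp
  qed
  have exceptions: "(\<Union>m. ?H m) - {u. converges_to_target u} \<subseteq> (\<Union>m j. ?B m j)"
  proof
    fix u assume "u \<in> (\<Union>m. ?H m) - {u. converges_to_target u}"
    then obtain m where "ideal_run m 0 u" "\<not> converges_to_target u" by blast
    then obtain j where "ideal_run m j u" "row_deviates N (m + j) (pc_iter N X0 u (m + j)) u"
      by (rule row_deviates_if_not_converges)
    then show "u \<in> (\<Union>m j. ?B m j)" by blast
  qed
  have "(1 - real N * eps) * measure pc_space (\<Union>m. ?H m)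
      \<le> measure pc_space ((\<Union>m. ?H m) \<inter> {u. converges_to_target u})"
    by (rule pc.prob_Int_ge_of_exceptions[OF disjoint sets_ideal_run sets_ideal_run_row_deviates
          measure_ideal_run_row_deviates_le sums sets_pc_converges exceptions])
  also have "(\<Union>m. ?H m) \<inter> {u. converges_to_target u}
      = {u. converges_to_target u \<and> (\<exists>l. in_T N eps (pc_iter N X0 u l))}"
    using hit by blast
  finally show ?thesis
    unfolding hit .
qed

end

theorem lemma4:
  fixes Nobj :: nat
  assumes "Nobj \<ge> 1"
  shows "\<exists>c3 > 0. \<forall>X0 :: real list. (\<forall>w \<in> set X0. w > 0) \<longrightarrow> sum_list X0 = 1 \<longrightarrow>
           (\<forall>eps > 0.
              measure pc_space
                {u \<in> space pc_space.
                   (\<lambda>l. l1_dist (pc_iter Nobj X0 u l) (replicate Nobj (1 / real Nobj))) \<longlonglongrightarrow> 0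
                 \<and> (\<exists>l. in_T Nobj eps (pc_iter Nobj X0 u l))}
              \<ge> (1 - c3 * eps) *
                measure pc_space {u \<in> space pc_space. \<exists>l. in_T Nobj eps (pc_iter Nobj X0 u l)})"
proof -
  \<comment> \<open>Only the run after it enters T_eps matters.\<close>
  have "(1 - real Nobj * eps) * measure pc_space {u. \<exists>l. in_T Nobj eps (pc_iter Nobj X0 u l)}
      \<le> measure pc_space {u. (\<lambda>l. l1_dist (pc_iter Nobj X0 u l) (replicate Nobj (1 / real Nobj))) \<longlonglongrightarrow> 0
                               \<and> (\<exists>l. in_T Nobj eps (pc_iter Nobj X0 u l))}"
    if "0 < eps" for X0 eps
  proof (cases "eps < 1")
    case True
    with assms that show ?thesis by (rule measure_converges_ge)
  next
    case False
    with assms have "1 * 1 \<le> real Nobj * eps" by (intro mult_mono) auto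
    then show ?thesis
      by (intro order_trans[OF mult_nonpos_nonneg measure_nonneg]) auto
  qed
  with assms show ?thesis
    by (intro exI[of _ "real Nobj"]) auto
qed

end
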